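(* Let $\mathcal{T}$ be a finite nonempty set of positive integers and let $A\in\mathbb{R}$ with $|A|\ne1$ and $A\ne0$. Then $$\frac{\big(\sum_{t\in\mathcal{T}}A^t\big)^2}{\sum_{t\in\mathcal{T}}A^{2t}}\le\frac{1+|A|}{\big|1-|A|\big|}.$$ *)

theory Defs
  imports Complex_Main
begin

end

theory Submission
  imports Defs
begin

text \<open>Expanding the square, \<open>(\<Sum>t. f t)\<^sup>2 = \<Sum>t. f t\<^sup>2 + 2 \<Sum>b. f b \<Sum>x>b. f x\<close>,
  so a bound on each tail by a multiple of its leading term bounds the square of the sum
  by the sum of the squares. For \<open>f t = a\<^sup>t\<close> the tails are geometric: if \<open>a < 1\<close> the tail
  beyond \<open>b\<close> is at most \<open>a\<^sup>b a / (1 - a)\<close>, and if \<open>a > 1\<close> the sum of the terms below \<open>b\<close>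
  is at most \<open>a\<^sup>b / (a - 1)\<close>, which is the same argument for the reversed order.\<close>

lemma square_sum_le_step:
  fixes c e x S Q :: real
  assumes "c * S \<le> e * x" and "c * S\<^sup>2 \<le> (c + 2 * e) * Q" and "0 \<le> x"
  shows "c * (x + S)\<^sup>2 \<le> (c + 2 * e) * (x\<^sup>2 + Q)"
proof -
  have "x * (c * S) \<le> x * (e * x)"
    using assms(1,3) by (rule mult_left_mono)
  then have "c * (x + S)\<^sup>2 \<le> c * x\<^sup>2 + 2 * e * x\<^sup>2 + c * S\<^sup>2"
    by (simp add: power2_eq_square algebra_simps)
  also have "\<dots> \<le> (c + 2 * e) * (x\<^sup>2 + Q)"
    using assms(2) by (simp add: algebra_simps)
  finally show ?thesis .
qed

context linorder
begin

lemma square_sum_le_of_tail_bounds: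
  fixes f :: "'a \<Rightarrow> real"
  assumes "finite T"
    and "\<And>t. t \<in> T \<Longrightarrow> 0 \<le> f t"
    and "\<And>b. b \<in> T \<Longrightarrow> c * (\<Sum>x\<in>{x\<in>T. b < x}. f x) \<le> e * f b"
  shows "c * (\<Sum>t\<in>T. f t)\<^sup>2 \<le> (c + 2 * e) * (\<Sum>t\<in>T. (f t)\<^sup>2)"
  using assms
proof (induction T rule: finite_linorder_min_induct)
  case empty
  then show ?case by simp
next
  case (insert b A)
  have tails: "{x \<in> insert b A. y < x} = {x \<in> A. y < x}" if "y \<in> A" for y
    using insert.hyps(2) that by auto
  have "{x \<in> insert b A. b < x} = A"
    using insert.hyps(2) by auto
  then have "c * (\<Sum>x\<in>A. f x) \<le> e * f b"
    using insert.prems(2) by fastforce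
  moreover have "c * (\<Sum>x\<in>A. f x)\<^sup>2 \<le> (c + 2 * e) * (\<Sum>x\<in>A. (f x)\<^sup>2)"
  proof (rule insert.IH)
    show "c * (\<Sum>x\<in>{x\<in>A. y < x}. f x) \<le> e * f y" if "y \<in> A" for y
      using insert.prems(2) [of y] tails [OF that] that by simp
  qed (use insert.prems(1) in simp)
  ultimately have "c * (f b + (\<Sum>x\<in>A. f x))\<^sup>2 \<le> (c + 2 * e) * ((f b)\<^sup>2 + (\<Sum>x\<in>A. (f x)\<^sup>2))"
    using insert.prems(1) by (intro square_sum_le_step) auto
  moreover have "b \<notin> A"
    using insert.hyps(2) by blast
  ultimately show ?case
    using insert.hyps(1) by simp
qed

end

lemma power_tail_sum_le:
  fixes a :: real
  assumes "0 \<le> a" and "a < 1" and "finite A" and "\<forall>x\<in>A. b < x"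
  shows "(1 - a) * (\<Sum>x\<in>A. a ^ x) \<le> a * a ^ b"
proof -
  define N where "N = Max (insert (Suc b) A)"
  have "A \<subseteq> {Suc b..N}"
    using assms(3,4) by (auto simp: N_def Suc_le_eq)
  then have "(\<Sum>x\<in>A. a ^ x) \<le> (\<Sum>i=Suc b..N. a ^ i)"
    using assms(1) by (intro sum_mono2) auto
  then have "(1 - a) * (\<Sum>x\<in>A. a ^ x) \<le> (1 - a) * (\<Sum>i=Suc b..N. a ^ i)"
    using assms(2) by (intro mult_left_mono) auto
  also have "\<dots> = a ^ Suc b - a ^ Suc N"
    using assms(3) by (intro sum_gp_multiplied) (simp add: N_def)
  also have "\<dots> \<le> a * a ^ b"
    using assms(1) by simp
  finally show ?thesis .
qed

lemma power_head_sum_le: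
  fixes a :: real
  assumes "1 \<le> a" and "\<forall>x\<in>A. x < b"
  shows "(a - 1) * (\<Sum>x\<in>A. a ^ x) \<le> a ^ b"
proof -
  have "(\<Sum>x\<in>A. a ^ x) \<le> (\<Sum>i<b. a ^ i)"
    using assms by (intro sum_mono2) auto
  then have "(a - 1) * (\<Sum>x\<in>A. a ^ x) \<le> (a - 1) * (\<Sum>i<b. a ^ i)"
    using assms(1) by (intro mult_left_mono) auto
  also have "\<dots> = a ^ b - 1"
    by (rule power_diff_1_eq [symmetric])
  finally show ?thesis by simp
qed

lemma abs_one_minus_mult_square_sum_power_le:
  fixes a :: real
  assumes "finite T" and "0 \<le> a"
  shows "\<bar>1 - a\<bar> * (\<Sum>t\<in>T. a ^ t)\<^sup>2 \<le> (1 + a) * (\<Sum>t\<in>T. (a ^ t)\<^sup>2)"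
proof (cases "a < 1")
  case True
  have "(1 - a) * (\<Sum>t\<in>T. a ^ t)\<^sup>2 \<le> ((1 - a) + 2 * a) * (\<Sum>t\<in>T. (a ^ t)\<^sup>2)"
    using assms True
    by (intro square_sum_le_of_tail_bounds power_tail_sum_le) auto
  with True show ?thesis by (simp add: add.commute)
next
  case False
  have "(a - 1) * (\<Sum>t\<in>T. a ^ t)\<^sup>2 \<le> ((a - 1) + 2 * 1) * (\<Sum>t\<in>T. (a ^ t)\<^sup>2)"
    using assms False
    by (intro linorder.square_sum_le_of_tail_bounds [OF dual_linorder])
      (auto intro: power_head_sum_le)
  with False show ?thesis by (simp add: add.commute)
qed

theorem proposition4:
  fixes T :: "nat set" and A :: real
  assumes "finite T" and "T \<noteq> {}" and "\<forall>t\<in>T. t > 0"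
    and "\<bar>A\<bar> \<noteq> 1" and "A \<noteq> 0"
  shows "(\<Sum>t\<in>T. A ^ t)\<^sup>2 / (\<Sum>t\<in>T. A ^ (2 * t))
         \<le> (1 + \<bar>A\<bar>) / \<bar>1 - \<bar>A\<bar>\<bar>"
proof -
  define S where "S = (\<Sum>t\<in>T. \<bar>A\<bar> ^ t)"
  define Q where "Q = (\<Sum>t\<in>T. (\<bar>A\<bar> ^ t)\<^sup>2)"
  have squares: "(\<Sum>t\<in>T. A ^ (2 * t)) = Q"
    by (simp add: Q_def power_mult mult.commute [of 2] flip: power_abs)
  have "Q > 0"
    using assms(1,2,5) by (auto simp: Q_def intro: sum_pos)
  have "\<bar>\<Sum>t\<in>T. A ^ t\<bar> \<le> S"
    using sum_abs [of "\<lambda>t. A ^ t" T] by (simp add: S_def power_abs)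
  then have "(\<Sum>t\<in>T. A ^ t)\<^sup>2 \<le> S\<^sup>2"
    using power_mono [of _ _ 2] by fastforce
  then have "(\<Sum>t\<in>T. A ^ t)\<^sup>2 / (\<Sum>t\<in>T. A ^ (2 * t)) \<le> S\<^sup>2 / Q"
    using \<open>Q > 0\<close> by (simp add: squares divide_right_mono)
  also have "\<dots> \<le> (1 + \<bar>A\<bar>) / \<bar>1 - \<bar>A\<bar>\<bar>"
    using abs_one_minus_mult_square_sum_power_le [OF assms(1), of "\<bar>A\<bar>"] \<open>Q > 0\<close> assms(4)
    by (simp add: S_def Q_def divide_simps mult.commute)
  finally show ?thesis .
qed

end
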